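(* Let $Q$ be an automorphic loop and let $J:Q\to Q$, $x\mapsto x^{-1}$, be the inversion map. Then $J$ lies in $N_{\mathrm{Sym}(Q)}(\mathrm{Mlt}(Q))\cap C_{\mathrm{Sym}(Q)}(\mathrm{Inn}(Q))$, i.e. $J$ normalizes $\mathrm{Mlt}(Q)$ and centralizes $\mathrm{Inn}(Q)$ in the symmetric group on $Q$.
   Context: A loop is a set with a binary operation in which left and right division are uniquely solvable and which has a neutral element $1$. $R_a:x\mapsto xa$, $L_a:x\mapsto ax$; $\mathrm{Mlt}(Q)=\langle R_x,L_x\mid x\in Q\rangle$; $\mathrm{Inn}(Q)$ is the stabilizer of $1$ in $\mathrm{Mlt}(Q)$. $Q$ is automorphic if $\mathrm{Inn}(Q)\le\mathrm{Aut}(Q)$. Automorphic loops are power-associative, so every element $x$ has a two-sided inverse $x^{-1}$. *)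

theory Defs
  imports Main
begin

definition loop :: "('a \<Rightarrow> 'a \<Rightarrow> 'a) \<Rightarrow> 'a \<Rightarrow> bool" where
  "loop mult e \<longleftrightarrow>
     (\<forall>a b. \<exists>!x. mult a x = b) \<and> (\<forall>a b. \<exists>!y. mult y a = b) \<and>
     (\<forall>x. mult e x = x \<and> mult x e = x)"

definition R_map :: "('a \<Rightarrow> 'a \<Rightarrow> 'a) \<Rightarrow> 'a \<Rightarrow> 'a \<Rightarrow> 'a" where
  "R_map mult a = (\<lambda>x. mult x a)"

definition L_map :: "('a \<Rightarrow> 'a \<Rightarrow> 'a) \<Rightarrow> 'a \<Rightarrow> 'a \<Rightarrow> 'a" where
  "L_map mult a = (\<lambda>x. mult a x)"

inductive_set Mlt :: "('a \<Rightarrow> 'a \<Rightarrow> 'a) \<Rightarrow> ('a \<Rightarrow> 'a) set" for mult where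
  Mlt_R: "R_map mult a \<in> Mlt mult"
| Mlt_L: "L_map mult a \<in> Mlt mult"
| Mlt_id: "id \<in> Mlt mult"
| Mlt_comp: "f \<in> Mlt mult \<Longrightarrow> g \<in> Mlt mult \<Longrightarrow> f \<circ> g \<in> Mlt mult"
| Mlt_inv: "f \<in> Mlt mult \<Longrightarrow> inv f \<in> Mlt mult"

definition Inn :: "('a \<Rightarrow> 'a \<Rightarrow> 'a) \<Rightarrow> 'a \<Rightarrow> ('a \<Rightarrow> 'a) set" where
  "Inn mult e = {f \<in> Mlt mult. f e = e}"

definition Aut :: "('a \<Rightarrow> 'a \<Rightarrow> 'a) \<Rightarrow> ('a \<Rightarrow> 'a) set" where
  "Aut mult = {f. bij f \<and> (\<forall>x y. f (mult x y) = mult (f x) (f y))}"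

definition automorphic_loop :: "('a \<Rightarrow> 'a \<Rightarrow> 'a) \<Rightarrow> 'a \<Rightarrow> bool" where
  "automorphic_loop mult e \<longleftrightarrow> loop mult e \<and> Inn mult e \<subseteq> Aut mult"

text \<open>Two-sided inverse x^-1 (exists in automorphic loops, which are power-associative).\<close>
definition loop_inv :: "('a \<Rightarrow> 'a \<Rightarrow> 'a) \<Rightarrow> 'a \<Rightarrow> 'a \<Rightarrow> 'a" where
  "loop_inv mult e x = (THE y. mult x y = e \<and> mult y x = e)"

end

theory Submission
  imports Defs
begin

text \<open>
  Every inner mapping is an automorphism fixing 1, hence preserves the unique two-sided inverse;
  this is the centralizing part. Since J is an involution, for the normalizing part it suffices
  that conjugation by J maps the generators of Mlt(Q) into Mlt(Q), and indeed
  J R_a J = L_(a^-1) and J L_a J = R_(a^-1). Both are the antiautomorphic inverse property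
  (xy)^-1 = y^-1 x^-1, which follows equationally from the fact that the standard generators
  T_x, R_(x,y), L_(x,y) of Inn(Q) are homomorphisms.
\<close>

text \<open>
  The axioms T_hom, R_hom, L_hom say that T_x = R_x^-1 L_x, R_(x,y) = R_(xy)^-1 R_y R_x and
  L_(x,y) = L_(yx)^-1 L_y L_x are multiplicative.
\<close>

locale automorphic_loop_ops =
  fixes mult :: "'a \<Rightarrow> 'a \<Rightarrow> 'a" (infixl "\<cdot>" 70)
    and ldiv :: "'a \<Rightarrow> 'a \<Rightarrow> 'a" (infixl "\<setminus>" 70)
    and rdiv :: "'a \<Rightarrow> 'a \<Rightarrow> 'a" (infixl "\<sslash>" 70)
    and e :: 'a
  assumes ldiv_mult: "x \<setminus> (x \<cdot> y) = y"
    and mult_ldiv: "x \<cdot> (x \<setminus> y) = y"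
    and rdiv_mult: "(y \<cdot> x) \<sslash> x = y"
    and mult_rdiv: "(y \<sslash> x) \<cdot> x = y"
    and left_neutral: "e \<cdot> x = x"
    and right_neutral: "x \<cdot> e = x"
    and T_hom: "(x \<cdot> (u \<cdot> v)) \<sslash> x = ((x \<cdot> u) \<sslash> x) \<cdot> ((x \<cdot> v) \<sslash> x)"
    and R_hom: "(((u \<cdot> v) \<cdot> x) \<cdot> y) \<sslash> (x \<cdot> y)
                = (((u \<cdot> x) \<cdot> y) \<sslash> (x \<cdot> y)) \<cdot> (((v \<cdot> x) \<cdot> y) \<sslash> (x \<cdot> y))"
    and L_hom: "(y \<cdot> x) \<setminus> (y \<cdot> (x \<cdot> (u \<cdot> v)))
                = ((y \<cdot> x) \<setminus> (y \<cdot> (x \<cdot> u))) \<cdot> ((y \<cdot> x) \<setminus> (y \<cdot> (x \<cdot> v)))"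
begin

abbreviation linv :: "'a \<Rightarrow> 'a" where
  "linv \<equiv> loop_inv mult e"

lemma ldiv_eq_iff: "y = x \<setminus> z \<longleftrightarrow> x \<cdot> y = z"
  by (metis ldiv_mult mult_ldiv)

lemma rdiv_self: "x \<sslash> x = e"
  by (metis rdiv_mult left_neutral)

lemma rdiv_neutral: "x \<sslash> e = x"
  by (metis rdiv_mult right_neutral)

lemma rdiv_neutral_eq_ldiv_neutral: "e \<sslash> x = x \<setminus> e"
proof -
  have "(x \<cdot> (x \<cdot> (x \<setminus> e))) \<sslash> x = ((x \<cdot> x) \<sslash> x) \<cdot> ((x \<cdot> (x \<setminus> e)) \<sslash> x)"
    by (rule T_hom)
  then have "x \<cdot> (e \<sslash> x) = e"
    by (simp add: mult_ldiv rdiv_mult right_neutral rdiv_self)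
  then show ?thesis
    by (metis ldiv_eq_iff)
qed

lemma linv_eq_ldiv: "linv x = x \<setminus> e"
  unfolding loop_inv_def
proof (rule the_equality)
  show "x \<cdot> (x \<setminus> e) = e \<and> (x \<setminus> e) \<cdot> x = e"
    by (metis mult_ldiv mult_rdiv rdiv_neutral_eq_ldiv_neutral)
  show "\<And>y. x \<cdot> y = e \<and> y \<cdot> x = e \<Longrightarrow> y = x \<setminus> e"
    by (metis ldiv_mult)
qed

lemma mult_linv: "x \<cdot> linv x = e"
  by (simp add: linv_eq_ldiv mult_ldiv)

lemma linv_mult: "linv x \<cdot> x = e"
  by (metis linv_eq_ldiv rdiv_neutral_eq_ldiv_neutral mult_rdiv)

lemma rdiv_neutral_eq_linv: "e \<sslash> x = linv x"
  by (simp add: linv_eq_ldiv rdiv_neutral_eq_ldiv_neutral)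

lemma linv_linv: "linv (linv x) = x"
  by (metis linv_eq_ldiv linv_mult ldiv_eq_iff)

lemma hom_linv:
  assumes "\<And>u v. f (u \<cdot> v) = f u \<cdot> f v" and "f e = e"
  shows "f (linv u) = linv (f u)"
  by (metis assms linv_eq_ldiv ldiv_eq_iff)

lemma flexible: "x \<cdot> (y \<cdot> x) = (x \<cdot> y) \<cdot> x"
proof -
  have "(x \<cdot> (y \<cdot> x)) \<sslash> x = ((x \<cdot> y) \<sslash> x) \<cdot> ((x \<cdot> x) \<sslash> x)"
    by (rule T_hom)
  then show ?thesis
    by (metis rdiv_mult mult_rdiv)
qed

lemma mult_mult_linv_commute: "(x \<cdot> y) \<cdot> linv y = (x \<cdot> linv y) \<cdot> y"
proof -
  have "(((x \<cdot> y) \<cdot> linv y) \<cdot> y) \<sslash> (linv y \<cdot> y)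
        = (((x \<cdot> linv y) \<cdot> y) \<sslash> (linv y \<cdot> y)) \<cdot> (((y \<cdot> linv y) \<cdot> y) \<sslash> (linv y \<cdot> y))"
    by (rule R_hom)
  then show ?thesis
    by (simp add: linv_mult mult_linv left_neutral rdiv_neutral) (metis rdiv_mult)
qed

lemma linv_mult_assoc: "(linv x \<cdot> y) \<cdot> x = linv x \<cdot> (y \<cdot> x)"
proof -
  have "(x \<cdot> linv x) \<setminus> (x \<cdot> (linv x \<cdot> (y \<cdot> x)))
        = ((x \<cdot> linv x) \<setminus> (x \<cdot> (linv x \<cdot> y))) \<cdot> ((x \<cdot> linv x) \<setminus> (x \<cdot> (linv x \<cdot> x)))"
    by (rule L_hom)
  then have "x \<cdot> (linv x \<cdot> (y \<cdot> x)) = x \<cdot> ((linv x \<cdot> y) \<cdot> x)"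
    by (simp add: mult_linv linv_mult right_neutral flexible) (metis ldiv_mult left_neutral)
  then show ?thesis
    by (metis ldiv_mult)
qed

lemma linv_mult_mult_linv: "linv ((u \<cdot> x) \<cdot> linv x) = (linv u \<cdot> x) \<cdot> linv x"
proof -
  have "((linv u \<cdot> x) \<cdot> linv x) \<sslash> (x \<cdot> linv x)
        = linv (((u \<cdot> x) \<cdot> linv x) \<sslash> (x \<cdot> linv x))"
    by (rule hom_linv) (simp_all add: R_hom left_neutral rdiv_self)
  then show ?thesis
    by (simp add: mult_linv rdiv_neutral)
qed

lemma linv_linv_mult_rdiv:
  "((linv x \<cdot> linv y) \<cdot> y) \<sslash> (x \<cdot> y) = (y \<sslash> (x \<cdot> y)) \<cdot> linv (x \<cdot> y)"
proof -
  have "(((linv x \<cdot> (linv y \<sslash> x)) \<cdot> x) \<cdot> y) \<sslash> (x \<cdot> y)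
        = (((linv x \<cdot> x) \<cdot> y) \<sslash> (x \<cdot> y)) \<cdot> ((((linv y \<sslash> x) \<cdot> x) \<cdot> y) \<sslash> (x \<cdot> y))"
    by (rule R_hom)
  then show ?thesis
    by (simp add: linv_mult_assoc mult_rdiv linv_mult left_neutral rdiv_neutral_eq_linv)
qed

lemma linv_mult_linv: "linv (x \<cdot> linv y) = y \<cdot> linv x"
proof -
  define z where "z = x \<sslash> y"
  have x: "x = z \<cdot> y"
    by (simp add: z_def mult_rdiv)
  have "linv (x \<cdot> linv y) = (linv z \<cdot> linv y) \<cdot> y"
    by (simp add: x mult_mult_linv_commute [symmetric] linv_mult_mult_linv)
  then have "linv (x \<cdot> linv y) \<sslash> x = (y \<sslash> x) \<cdot> linv x"
    by (simp add: x linv_linv_mult_rdiv)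
  then show ?thesis
    by (metis mult_mult_linv_commute mult_rdiv)
qed

lemma linv_mult_antihom: "linv (x \<cdot> y) = linv y \<cdot> linv x"
  by (metis linv_mult_linv linv_linv)

lemma linv_involution: "linv \<circ> linv = id"
  by (simp add: fun_eq_iff linv_linv)

lemma linv_conj_R_map: "linv \<circ> R_map mult a \<circ> linv = L_map mult (linv a)"
  by (simp add: fun_eq_iff R_map_def L_map_def linv_mult_antihom linv_linv)

lemma linv_conj_L_map: "linv \<circ> L_map mult a \<circ> linv = R_map mult (linv a)"
  by (simp add: fun_eq_iff R_map_def L_map_def linv_mult_antihom linv_linv)

lemma hom_comp_linv:
  assumes "\<And>u v. f (u \<cdot> v) = f u \<cdot> f v" and "f e = e"
  shows "linv \<circ> f = f \<circ> linv"
  using hom_linv [OF assms] by (simp add: fun_eq_iff)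

end

definition loop_ldiv :: "('a \<Rightarrow> 'a \<Rightarrow> 'a) \<Rightarrow> 'a \<Rightarrow> 'a \<Rightarrow> 'a" where
  "loop_ldiv mult a b = (THE x. mult a x = b)"

definition loop_rdiv :: "('a \<Rightarrow> 'a \<Rightarrow> 'a) \<Rightarrow> 'a \<Rightarrow> 'a \<Rightarrow> 'a" where
  "loop_rdiv mult b a = (THE y. mult y a = b)"

lemma loop_division:
  assumes "loop mult e"
  shows "loop_ldiv mult x (mult x y) = y" "mult x (loop_ldiv mult x y) = y"
    and "loop_rdiv mult (mult y x) x = y" "mult (loop_rdiv mult y x) x = y"
proof -
  have ex1_ldiv: "\<And>a b. \<exists>!x. mult a x = b" and ex1_rdiv: "\<And>a b. \<exists>!y. mult y a = b"
    using assms unfolding loop_def by blast+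
  show "loop_ldiv mult x (mult x y) = y"
    unfolding loop_ldiv_def by (rule the1_equality [OF ex1_ldiv]) simp
  show "mult x (loop_ldiv mult x y) = y"
    unfolding loop_ldiv_def by (rule theI' [OF ex1_ldiv])
  show "loop_rdiv mult (mult y x) x = y"
    unfolding loop_rdiv_def by (rule the1_equality [OF ex1_rdiv]) simp
  show "mult (loop_rdiv mult y x) x = y"
    unfolding loop_rdiv_def by (rule theI' [OF ex1_rdiv])
qed

lemma inv_R_map:
  assumes "loop mult e"
  shows "inv (R_map mult a) = (\<lambda>y. loop_rdiv mult y a)"
  by (rule inv_equality) (simp_all add: R_map_def loop_division [OF assms])

lemma inv_L_map:
  assumes "loop mult e"
  shows "inv (L_map mult a) = loop_ldiv mult a"
  by (rule inv_equality) (simp_all add: L_map_def loop_division [OF assms])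

lemma bij_R_map: "loop mult e \<Longrightarrow> bij (R_map mult a)"
  by (rule o_bij [where g = "\<lambda>y. loop_rdiv mult y a"])
    (simp_all add: fun_eq_iff R_map_def loop_division)

lemma bij_L_map: "loop mult e \<Longrightarrow> bij (L_map mult a)"
  by (rule o_bij [where g = "loop_ldiv mult a"])
    (simp_all add: fun_eq_iff L_map_def loop_division)

lemma Mlt_bij: "f \<in> Mlt mult \<Longrightarrow> loop mult e \<Longrightarrow> bij f"
  by (induction rule: Mlt.induct) (auto intro: bij_R_map bij_L_map bij_comp bij_imp_bij_inv)

lemma Inn_hom:
  assumes "automorphic_loop mult e" and "f \<in> Mlt mult" and "f e = e"
  shows "f (mult u v) = mult (f u) (f v)"
  using assms unfolding automorphic_loop_def Inn_def Aut_def by blast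

lemma automorphic_loop_ops:
  assumes aut: "automorphic_loop mult e"
  shows "automorphic_loop_ops mult (loop_ldiv mult) (loop_rdiv mult) e"
proof -
  have loop: "loop mult e"
    using aut by (simp add: automorphic_loop_def)
  note div = loop_division [OF loop]
  have neutral: "mult e x = x" "mult x e = x" for x
    using loop by (simp_all add: loop_def)
  have T_hom: "loop_rdiv mult (mult x (mult u v)) x
        = mult (loop_rdiv mult (mult x u) x) (loop_rdiv mult (mult x v) x)" for x u v
  proof -
    let ?T = "inv (R_map mult x) \<circ> L_map mult x"
    have "?T e = e"
      using div(3) [of e x] by (simp add: inv_R_map [OF loop] L_map_def neutral)
    moreover have "?T \<in> Mlt mult"
      by (intro Mlt.intros)
    ultimately show ?thesis
      using Inn_hom [OF aut, of ?T u v] by (simp add: inv_R_map [OF loop] L_map_def)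
  qed
  have R_hom: "loop_rdiv mult (mult (mult (mult u v) x) y) (mult x y)
        = mult (loop_rdiv mult (mult (mult u x) y) (mult x y))
               (loop_rdiv mult (mult (mult v x) y) (mult x y))" for x y u v
  proof -
    let ?R = "inv (R_map mult (mult x y)) \<circ> R_map mult y \<circ> R_map mult x"
    have "?R e = e"
      using div(3) [of e "mult x y"] by (simp add: inv_R_map [OF loop]) (simp add: R_map_def neutral)
    moreover have "?R \<in> Mlt mult"
      by (intro Mlt.intros)
    ultimately show ?thesis
      using Inn_hom [OF aut, of ?R u v] by (simp add: inv_R_map [OF loop]) (simp add: R_map_def)
  qed
  have L_hom: "loop_ldiv mult (mult y x) (mult y (mult x (mult u v)))
        = mult (loop_ldiv mult (mult y x) (mult y (mult x u)))
               (loop_ldiv mult (mult y x) (mult y (mult x v)))" for x y u v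
  proof -
    let ?L = "inv (L_map mult (mult y x)) \<circ> L_map mult y \<circ> L_map mult x"
    have "?L e = e"
      using div(1) [of "mult y x" e] by (simp add: inv_L_map [OF loop]) (simp add: L_map_def neutral)
    moreover have "?L \<in> Mlt mult"
      by (intro Mlt.intros)
    ultimately show ?thesis
      using Inn_hom [OF aut, of ?L u v] by (simp add: inv_L_map [OF loop]) (simp add: L_map_def)
  qed
  show ?thesis
    by unfold_locales (rule div neutral T_hom R_hom L_hom)+
qed

lemma Mlt_conj_closed:
  assumes loop: "loop mult e" and J: "J \<circ> J = id"
    and R: "\<And>a. J \<circ> R_map mult a \<circ> J \<in> Mlt mult"
    and L: "\<And>a. J \<circ> L_map mult a \<circ> J \<in> Mlt mult"
    and f: "f \<in> Mlt mult"
  shows "J \<circ> f \<circ> J \<in> Mlt mult"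
  using f
proof (induction rule: Mlt.induct)
  case Mlt_id
  then show ?case
    using J by (metis Mlt.Mlt_id comp_id)
next
  case (Mlt_comp f g)
  have "J \<circ> (f \<circ> g) \<circ> J = (J \<circ> f \<circ> J) \<circ> (J \<circ> g \<circ> J)"
    using J by (simp add: fun_eq_iff pointfree_idE)
  then show ?case
    using Mlt_comp.IH Mlt.Mlt_comp by metis
next
  case (Mlt_inv f)
  have "bij J"
    using J by (metis o_bij)
  moreover have "inv J = J"
    using J by (metis inv_unique_comp)
  ultimately have inv_conj: "inv (J \<circ> f \<circ> J) = J \<circ> inv f \<circ> J"
    using Mlt_bij [OF Mlt_inv.hyps loop] by (simp add: o_inv_distrib bij_comp comp_assoc)
  show ?case
    using Mlt.Mlt_inv [OF Mlt_inv.IH] unfolding inv_conj .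
qed (rule R L)+

lemma involution_conj_image:
  assumes J: "J \<circ> J = id" and closed: "\<And>f. f \<in> M \<Longrightarrow> J \<circ> f \<circ> J \<in> M"
  shows "(\<lambda>f. J \<circ> f \<circ> inv J) ` M = M"
proof
  have inv_J: "inv J = J"
    using J by (metis inv_unique_comp)
  then show "(\<lambda>f. J \<circ> f \<circ> inv J) ` M \<subseteq> M"
    using closed by auto
  show "M \<subseteq> (\<lambda>f. J \<circ> f \<circ> inv J) ` M"
  proof
    fix f
    assume "f \<in> M"
    moreover have "f = J \<circ> (J \<circ> f \<circ> J) \<circ> J"
      using J by (simp add: fun_eq_iff pointfree_idE)
    ultimately show "f \<in> (\<lambda>f. J \<circ> f \<circ> inv J) ` M"
      using closed inv_J by (metis image_eqI)
  qed
qed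

theorem corollary2p2:
  fixes mult :: "'a \<Rightarrow> 'a \<Rightarrow> 'a" and e :: 'a
  assumes "automorphic_loop mult e"
  defines "J \<equiv> loop_inv mult e"
  shows "bij J
    \<and> (\<lambda>f. J \<circ> f \<circ> inv J) ` Mlt mult = Mlt mult
    \<and> (\<forall>f \<in> Inn mult e. J \<circ> f = f \<circ> J)"
proof -
  have loop: "loop mult e"
    using assms(1) by (simp add: automorphic_loop_def)
  interpret automorphic_loop_ops mult "loop_ldiv mult" "loop_rdiv mult" e
    by (rule automorphic_loop_ops [OF assms(1)])
  have involution: "J \<circ> J = id"
    unfolding J_def by (rule linv_involution)
  have conj_closed: "J \<circ> f \<circ> J \<in> Mlt mult" if "f \<in> Mlt mult" for f
    using loop involution _ _ that
    by (rule Mlt_conj_closed) (simp_all add: J_def linv_conj_R_map linv_conj_L_map Mlt.intros)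
  have "bij J"
    by (rule o_bij [OF involution involution])
  moreover have "(\<lambda>f. J \<circ> f \<circ> inv J) ` Mlt mult = Mlt mult"
    using involution conj_closed by (rule involution_conj_image)
  moreover have "J \<circ> f = f \<circ> J" if "f \<in> Inn mult e" for f
  proof -
    from that have "f \<in> Mlt mult" and "f e = e"
      unfolding Inn_def by auto
    then show ?thesis
      unfolding J_def by (intro hom_comp_linv Inn_hom [OF assms(1)])
  qed
  ultimately show ?thesis
    by blast
qed

end
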